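(* Let $\mathbf C$ be an admissible category of coframes. There is an identity-on-morphisms functor $(L,\lim_L)\mapsto(L,\operatorname{adh}_L)$ from $\mathbf C^{\mathrm{pretop}}$ to $\mathbf C^{\mathrm{adh}}$, which is right adjoint to the identity-on-morphisms functor $(L,\nu)\mapsto(L,\lim_\nu)$ from $\mathbf C^{\mathrm{adh}}$ to $\mathbf C^{\mathrm{pretop}}$. The same holds with $\mathbf C^{\mathrm{pretop}}_{\mathrm{cl}}$ in place of $\mathbf C^{\mathrm{pretop}}$.
   Context: A category of coframes has coframes as objects and coframe morphisms (preserving arbitrary infima and finite suprema); it is admissible if every powerset is an object and there are classes of index sets $\mathcal I,\mathcal J$ with morphisms exactly the monotone maps preserving existing $I$-indexed infima ($I\in\mathcal I$) and $J$-indexed suprema ($J\in\mathcal J$). Every coframe morphism $\varphi$ has a left adjoint $\varphi_!$. $\mathcal C_L$ is the set of complemented elements of $L$. A filter on $L$ is a non-empty upward-closed subset closed under binary meets ($L$ allowed); $\mathbb F L$ is the set of filters. For $\mathcal A\subseteq L$, its grill is $\mathcal A^\#=\{\ell\in L: a\wedge\ell\ne\bot\text{ for all }a\in\mathcal A\}$. A convergence $\mathbf C$-object is $(L,\lim_L)$ with $\lim_L:\mathbb F L\to L$ monotone; morphisms are $\mathbf C$-morphisms $\varphi:L\to L'$ with $\lim_{L'}\mathcal F\le\varphi(\lim_L\varphi^{-1}(\mathcal F))$. It is pretopological if $\lim_L\bigcap_i\mathcal F_i=\bigwedge_i\lim_L\mathcal F_i$ for all families of filters, and classical if $\mathcal F\cap\mathcal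 C_L=\mathcal G\cap\mathcal C_L$ implies $\lim_L\mathcal F=\lim_L\mathcal G$; $\mathbf C^{\mathrm{pretop}}$ and $\mathbf C^{\mathrm{pretop}}_{\mathrm{cl}}$ are the corresponding full subcategories. The raw adherence is $\operatorname{adh}^0_L\ell=\bigvee\{\lim_L\mathcal F:\mathcal F\in\mathbb F L,\ \ell\in\mathcal F^\#\}$, and the adherence is $\operatorname{adh}_L\ell=\bigwedge\{\operatorname{adh}^0_L a: a\in\mathcal C_L,\ a\ge\ell\}$. An adherence structure on $L$ is a monotone $\nu:L\to L$ preserving finite suprema of complemented elements and satisfying $\nu(\ell)=\bigwedge\{\nu(a):a\in\mathcal C_L,a\ge\ell\}$. An adherence $\mathbf C$-object is $(L,\nu_L)$ with $\nu_L$ an adherence structure; $\mathbf C^{\mathrm{adh}}$ has as morphisms the $\mathbf C$-morphisms $\varphi:L\to L'$ with $\nu_{L'}(\ell')\le\varphi(\nu_L(\varphi_!(\ell')))$ for all $\ell'\in L'$. For an adherence structure $\nu$, $\lim_\nu\mathcal F=\bigwedge\{\nu(a):a\in\mathcal C_L\cap\mathcal F^\#\}$. *)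

theory Defs
  imports Main
begin

class coframe = complete_lattice +
  assumes coframe_sup_Inf: "sup a (Inf S) = (INF b\<in>S. sup a b)"

definition cofr_mor :: "('a::coframe \<Rightarrow> 'b::coframe) \<Rightarrow> bool" where
  "cofr_mor \<phi> \<longleftrightarrow> (\<forall>S. \<phi> (Inf S) = Inf (\<phi> ` S)) \<and> \<phi> bot = bot
      \<and> (\<forall>a b. \<phi> (sup a b) = sup (\<phi> a) (\<phi> b))"

definition ladj :: "('a::coframe \<Rightarrow> 'b::coframe) \<Rightarrow> 'b \<Rightarrow> 'a" where
  "ladj \<phi> y = Inf {x. y \<le> \<phi> x}"

definition compl_elems :: "'a::coframe set" where
  "compl_elems = {a. \<exists>b. inf a b = bot \<and> sup a b = top}"

text \<open>Filters on L (the improper filter L itself allowed).\<close>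
definition lfilter :: "'a::coframe set \<Rightarrow> bool" where
  "lfilter F \<longleftrightarrow> F \<noteq> {} \<and> (\<forall>x y. x \<in> F \<longrightarrow> x \<le> y \<longrightarrow> y \<in> F)
      \<and> (\<forall>x y. x \<in> F \<longrightarrow> y \<in> F \<longrightarrow> inf x y \<in> F)"

definition grill :: "'a::coframe set \<Rightarrow> 'a set" where
  "grill A = {l. \<forall>a\<in>A. inf a l \<noteq> bot}"

text \<open>A limit operation lim : FL -> L (represented as a total function, only its
  values on filters matter), monotone on filters.\<close>
definition conv_obj :: "('a::coframe set \<Rightarrow> 'a) \<Rightarrow> bool" where
  "conv_obj lim \<longleftrightarrow> (\<forall>F G. lfilter F \<longrightarrow> lfilter G \<longrightarrow> F \<subseteq> G \<longrightarrow> lim F \<le> lim G)"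

definition pretop :: "('a::coframe set \<Rightarrow> 'a) \<Rightarrow> bool" where
  "pretop lim \<longleftrightarrow> conv_obj lim \<and>
     (\<forall>\<FF>. (\<forall>F\<in>\<FF>. lfilter F) \<longrightarrow> lim (\<Inter>\<FF>) = (INF F\<in>\<FF>. lim F))"

definition classical :: "('a::coframe set \<Rightarrow> 'a) \<Rightarrow> bool" where
  "classical lim \<longleftrightarrow> (\<forall>F G. lfilter F \<longrightarrow> lfilter G \<longrightarrow>
       F \<inter> compl_elems = G \<inter> compl_elems \<longrightarrow> lim F = lim G)"

definition conv_mor :: "('a::coframe set \<Rightarrow> 'a) \<Rightarrow> ('b::coframe set \<Rightarrow> 'b) \<Rightarrow> ('a \<Rightarrow> 'b) \<Rightarrow> bool" where
  "conv_mor lim lim' \<phi> \<longleftrightarrow> cofr_mor \<phi> \<and>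
     (\<forall>F. lfilter F \<longrightarrow> lim' F \<le> \<phi> (lim (\<phi> -` F)))"

definition adh0 :: "('a::coframe set \<Rightarrow> 'a) \<Rightarrow> 'a \<Rightarrow> 'a" where
  "adh0 lim l = Sup {lim F | F. lfilter F \<and> l \<in> grill F}"

definition adh :: "('a::coframe set \<Rightarrow> 'a) \<Rightarrow> 'a \<Rightarrow> 'a" where
  "adh lim l = Inf {adh0 lim a | a. a \<in> compl_elems \<and> l \<le> a}"

definition adh_structure :: "('a::coframe \<Rightarrow> 'a) \<Rightarrow> bool" where
  "adh_structure \<nu> \<longleftrightarrow> mono \<nu> \<and> \<nu> bot = bot
     \<and> (\<forall>a b. a \<in> compl_elems \<longrightarrow> b \<in> compl_elems \<longrightarrow> \<nu> (sup a b) = sup (\<nu> a) (\<nu> b))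
     \<and> (\<forall>l. \<nu> l = Inf {\<nu> a | a. a \<in> compl_elems \<and> l \<le> a})"

definition adh_mor :: "('a::coframe \<Rightarrow> 'a) \<Rightarrow> ('b::coframe \<Rightarrow> 'b) \<Rightarrow> ('a \<Rightarrow> 'b) \<Rightarrow> bool" where
  "adh_mor \<nu> \<nu>' \<phi> \<longleftrightarrow> cofr_mor \<phi> \<and> (\<forall>y. \<nu>' y \<le> \<phi> (\<nu> (ladj \<phi> y)))"

definition lim_of :: "('a::coframe \<Rightarrow> 'a) \<Rightarrow> 'a set \<Rightarrow> 'a" where
  "lim_of \<nu> F = Inf {\<nu> a | a. a \<in> compl_elems \<inter> grill F}"

end

theory Submission
  imports Defs
begin

text \<open>Everything is decided on complemented elements. If a has complement b and F is a
  filter, then a meets every member of F exactly when b \<notin> F. Hence the complemented part of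
  the grill of F depends only on the complemented part of F, the complemented grill of an
  intersection of filters is the union of their complemented grills, and grills of filters are
  prime; this makes adh an adherence structure and lim_\<nu> a classical pretopology. For the
  adjunction, both "\<phi> is a morphism lim_\<nu> \<rightarrow> lim'" and "\<phi> is a morphism \<nu> \<rightarrow> adh_lim'"
  unfold to adh0_lim' (\<phi> a) \<le> \<phi> (\<nu> a) for all complemented a. None of this needs the
  convergences to be pretopological.\<close>

context coframe
begin

subclass distrib_lattice
proof
  fix x y z :: 'a
  have "sup x (Inf {y, z}) = (INF b\<in>{y, z}. sup x b)" by (rule coframe_sup_Inf)
  then show "sup x (inf y z) = inf (sup x y) (sup x z)" by simp
qed

end

lemma compl_elemsE:
  assumes "a \<in> compl_elems"
  obtains b where "inf a b = bot" "sup a b = top" "b \<in> compl_elems"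
  using assms unfolding compl_elems_def by (auto simp: inf_commute sup_commute)

lemma le_complement:
  fixes a b x :: "'a::coframe"
  assumes "inf a b = bot" "sup a b = top" "inf x a = bot"
  shows "x \<le> b"
proof -
  have "x = inf x (sup a b)" using assms(2) by simp
  also have "\<dots> = inf x b" using assms(3) by (simp add: inf_sup_distrib1)
  finally show ?thesis by (metis inf.cobounded2)
qed

lemma bot_in_compl_elems: "(bot::'a::coframe) \<in> compl_elems"
  unfolding compl_elems_def by auto

lemma sup_in_compl_elems:
  fixes a b :: "'a::coframe"
  assumes "a \<in> compl_elems" "b \<in> compl_elems"
  shows "sup a b \<in> compl_elems"
proof -
  obtain a' where a: "inf a a' = bot" "sup a a' = top" using assms(1) by (rule compl_elemsE)
  obtain b' where b: "inf b b' = bot" "sup b b' = top" using assms(2) by (rule compl_elemsE)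
  have "inf (sup a b) (inf a' b') = bot"
    using a(1) b(1) by (simp add: inf_sup_distrib2) (metis inf.assoc inf.commute inf_bot_left)
  moreover have "sup (sup a b) (inf a' b') = top"
    using a(2) b(2) by (simp add: sup_inf_distrib1) (metis sup.assoc sup.commute sup_top_right)
  ultimately show ?thesis unfolding compl_elems_def by blast
qed

lemma grill_upward:
  fixes l :: "'a::coframe"
  assumes "l \<in> grill F" "l \<le> l'"
  shows "l' \<in> grill F"
  unfolding grill_def
proof clarify
  fix f assume "f \<in> F" "inf f l' = bot"
  moreover have "inf f l \<le> inf f l'" using assms(2) by (simp add: inf.coboundedI2)
  ultimately show False using assms(1) unfolding grill_def by (auto simp: bot_unique)
qed

lemma grill_antimono: "F \<subseteq> G \<Longrightarrow> grill G \<subseteq> grill F"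
  unfolding grill_def by auto

lemma bot_notin_grill: "lfilter F \<Longrightarrow> (bot::'a::coframe) \<notin> grill F"
  unfolding grill_def lfilter_def by auto

lemma notin_grill_iff_complement_in_filter:
  fixes a b :: "'a::coframe"
  assumes F: "lfilter F" and ab: "inf a b = bot" "sup a b = top"
  shows "a \<notin> grill F \<longleftrightarrow> b \<in> F"
proof
  assume "a \<notin> grill F"
  then obtain f where "f \<in> F" "inf f a = bot" unfolding grill_def by auto
  with le_complement[OF ab] F show "b \<in> F" unfolding lfilter_def by blast
next
  assume "b \<in> F"
  then show "a \<notin> grill F" using ab(1) unfolding grill_def by (auto simp: inf_commute)
qed

lemma grill_sup_disj:
  fixes a b :: "'a::coframe"
  assumes F: "lfilter F" and ab: "sup a b \<in> grill F"
  shows "a \<in> grill F \<or> b \<in> grill F"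
proof (rule ccontr)
  assume "\<not> (a \<in> grill F \<or> b \<in> grill F)"
  then obtain f g where fg: "f \<in> F" "inf f a = bot" "g \<in> F" "inf g b = bot"
    unfolding grill_def by auto
  then have "inf (inf f g) (sup a b) = bot"
    by (simp add: inf_sup_distrib1) (metis inf.assoc inf.commute inf_bot_left)
  moreover have "inf f g \<in> F" using F fg unfolding lfilter_def by blast
  ultimately show False using ab unfolding grill_def by auto
qed

lemma compl_elems_Int_grill_Inter:
  fixes \<FF> :: "'a::coframe set set"
  assumes "\<forall>F\<in>\<FF>. lfilter F"
  shows "compl_elems \<inter> grill (\<Inter>\<FF>) = (\<Union>F\<in>\<FF>. compl_elems \<inter> grill F)"
proof (intro equalityI subsetI)
  fix a assume a: "a \<in> compl_elems \<inter> grill (\<Inter>\<FF>)"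
  obtain b where b: "inf a b = bot" "sup a b = top" using a by (blast elim: compl_elemsE)
  have "b \<notin> \<Inter>\<FF>" using a b(1) unfolding grill_def by (auto simp: inf_commute)
  then show "a \<in> (\<Union>F\<in>\<FF>. compl_elems \<inter> grill F)"
    using a notin_grill_iff_complement_in_filter[OF _ b] assms by blast
qed (use grill_antimono in blast)

lemma compl_elems_Int_grill_cong:
  fixes F G :: "'a::coframe set"
  assumes "lfilter F" "lfilter G" "F \<inter> compl_elems = G \<inter> compl_elems"
  shows "compl_elems \<inter> grill F = compl_elems \<inter> grill G"
proof (intro set_eqI)
  fix a
  show "a \<in> compl_elems \<inter> grill F \<longleftrightarrow> a \<in> compl_elems \<inter> grill G"
  proof (cases "a \<in> compl_elems")
    case True
    then obtain b where "inf a b = bot" "sup a b = top" "b \<in> compl_elems" by (rule compl_elemsE)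
    then show ?thesis using assms notin_grill_iff_complement_in_filter by blast
  qed simp
qed

lemma cofr_mor_Inf: "cofr_mor \<phi> \<Longrightarrow> \<phi> (Inf S) = Inf (\<phi> ` S)"
  unfolding cofr_mor_def by auto

lemma cofr_mor_bot: "cofr_mor \<phi> \<Longrightarrow> \<phi> bot = bot"
  unfolding cofr_mor_def by auto

lemma cofr_mor_sup: "cofr_mor \<phi> \<Longrightarrow> \<phi> (sup a b) = sup (\<phi> a) (\<phi> b)"
  unfolding cofr_mor_def by auto

lemma cofr_mor_top: "cofr_mor \<phi> \<Longrightarrow> \<phi> top = top"
  using cofr_mor_Inf[of \<phi> "{}"] by simp

lemma cofr_mor_inf: "cofr_mor \<phi> \<Longrightarrow> \<phi> (inf a b) = inf (\<phi> a) (\<phi> b)"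
  using cofr_mor_Inf[of \<phi> "{a, b}"] by simp

lemma cofr_mor_mono:
  assumes "cofr_mor \<phi>"
  shows "mono \<phi>"
proof (rule monoI)
  fix x y :: 'a assume "x \<le> y"
  then have "\<phi> y = sup (\<phi> x) (\<phi> y)" by (simp add: cofr_mor_sup[OF assms, symmetric] sup.absorb2)
  then show "\<phi> x \<le> \<phi> y" by (metis sup.cobounded1)
qed

lemma cofr_mor_complement:
  assumes "cofr_mor \<phi>" "inf a b = bot" "sup a b = top"
  shows "inf (\<phi> a) (\<phi> b) = bot" "sup (\<phi> a) (\<phi> b) = top"
  using assms by (simp_all add: cofr_mor_inf[symmetric] cofr_mor_sup[symmetric] cofr_mor_bot cofr_mor_top)

lemma cofr_mor_compl_elems: "cofr_mor \<phi> \<Longrightarrow> a \<in> compl_elems \<Longrightarrow> \<phi> a \<in> compl_elems"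
  unfolding compl_elems_def using cofr_mor_complement by blast

lemma ladj_le_iff:
  assumes "cofr_mor \<phi>"
  shows "ladj \<phi> y \<le> x \<longleftrightarrow> y \<le> \<phi> x"
proof
  have "y \<le> \<phi> (ladj \<phi> y)"
    unfolding ladj_def cofr_mor_Inf[OF assms] by (auto intro: Inf_greatest)
  then show "ladj \<phi> y \<le> x \<Longrightarrow> y \<le> \<phi> x"
    using cofr_mor_mono[OF assms] by (meson monoD order_trans)
qed (simp add: ladj_def Inf_lower)

lemma lfilter_vimage:
  assumes \<phi>: "cofr_mor \<phi>" and G: "lfilter G"
  shows "lfilter (\<phi> -` G)"
proof -
  have up: "y \<in> G" if "x \<in> G" "x \<le> y" for x y
    using G that unfolding lfilter_def by blast
  have inf: "inf x y \<in> G" if "x \<in> G" "y \<in> G" for x y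
    using G that unfolding lfilter_def by blast
  obtain x where "x \<in> G" using G unfolding lfilter_def by blast
  then have "top \<in> \<phi> -` G" using up cofr_mor_top[OF \<phi>] by simp
  moreover have "y \<in> \<phi> -` G" if "x \<in> \<phi> -` G" "x \<le> y" for x y
    using that up monoD[OF cofr_mor_mono[OF \<phi>]] by blast
  moreover have "inf x y \<in> \<phi> -` G" if "x \<in> \<phi> -` G" "y \<in> \<phi> -` G" for x y
    using that inf cofr_mor_inf[OF \<phi>] by simp
  ultimately show ?thesis unfolding lfilter_def by blast
qed

lemma in_grill_vimage:
  assumes "cofr_mor \<phi>" "\<phi> a \<in> grill G"
  shows "a \<in> grill (\<phi> -` G)"
  unfolding grill_def
proof clarify
  fix x assume x: "\<phi> x \<in> G" "inf x a = bot"
  then have "inf (\<phi> x) (\<phi> a) = bot" by (metis assms(1) cofr_mor_inf cofr_mor_bot)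
  then show False using assms(2) x(1) unfolding grill_def by blast
qed

lemma in_grill_vimage_iff:
  assumes \<phi>: "cofr_mor \<phi>" and G: "lfilter G" and a: "a \<in> compl_elems"
  shows "a \<in> grill (\<phi> -` G) \<longleftrightarrow> \<phi> a \<in> grill G"
proof -
  obtain b where b: "inf a b = bot" "sup a b = top" using a by (rule compl_elemsE)
  note \<phi>b = cofr_mor_complement[OF \<phi> b]
  show ?thesis
    using notin_grill_iff_complement_in_filter[OF lfilter_vimage[OF \<phi> G] b]
          notin_grill_iff_complement_in_filter[OF G \<phi>b] by blast
qed

lemma adh0_le_iff: "adh0 lim l \<le> x \<longleftrightarrow> (\<forall>F. lfilter F \<longrightarrow> l \<in> grill F \<longrightarrow> lim F \<le> x)"
  unfolding adh0_def by (auto simp: Sup_le_iff)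

lemma adh0_upper: "lfilter F \<Longrightarrow> l \<in> grill F \<Longrightarrow> lim F \<le> adh0 lim l"
  using adh0_le_iff by blast

lemma adh0_mono: "l \<le> l' \<Longrightarrow> adh0 lim l \<le> adh0 lim l'"
  by (meson adh0_le_iff adh0_upper grill_upward)

lemma adh0_bot: "adh0 lim (bot::'a::coframe) = bot"
  unfolding adh0_def using bot_notin_grill by auto

lemma adh0_sup: "adh0 lim (sup a b) = sup (adh0 lim a) (adh0 lim (b::'a::coframe))"
proof (rule antisym)
  show "adh0 lim (sup a b) \<le> sup (adh0 lim a) (adh0 lim b)"
    unfolding adh0_le_iff by (meson adh0_upper grill_sup_disj le_supI1 le_supI2)
qed (simp add: adh0_mono)

lemma adh_eq_adh0: "a \<in> compl_elems \<Longrightarrow> adh lim a = adh0 lim a"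
  unfolding adh_def by (rule antisym) (auto intro: Inf_lower Inf_greatest adh0_mono)

lemma adh_structure_adh: "adh_structure (adh lim)"
  unfolding adh_structure_def
proof (intro conjI allI impI)
  show "mono (adh lim)"
    unfolding mono_def adh_def by (auto intro!: Inf_superset_mono)
  show "adh lim bot = bot"
    by (simp add: adh_eq_adh0 bot_in_compl_elems adh0_bot)
next
  fix a b :: 'a assume "a \<in> compl_elems" "b \<in> compl_elems"
  then show "adh lim (sup a b) = sup (adh lim a) (adh lim b)"
    by (simp add: adh_eq_adh0 sup_in_compl_elems adh0_sup)
next
  fix l :: 'a
  have "{adh lim a |a. a \<in> compl_elems \<and> l \<le> a} = {adh0 lim a |a. a \<in> compl_elems \<and> l \<le> a}"
    by (metis (lifting) adh_eq_adh0)
  then show "adh lim l = Inf {adh lim a |a. a \<in> compl_elems \<and> l \<le> a}"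
    unfolding adh_def by simp
qed

lemma adh0_conv_mor:
  assumes "conv_mor lim lim' \<phi>"
  shows "adh0 lim' (\<phi> a) \<le> \<phi> (adh0 lim a)"
  unfolding adh0_le_iff
proof (intro allI impI)
  fix G assume G: "lfilter G" "\<phi> a \<in> grill G"
  have \<phi>: "cofr_mor \<phi>" using assms unfolding conv_mor_def by blast
  have "lim' G \<le> \<phi> (lim (\<phi> -` G))" using assms G(1) unfolding conv_mor_def by blast
  also have "\<dots> \<le> \<phi> (adh0 lim a)"
    using adh0_upper[OF lfilter_vimage[OF \<phi> G(1)] in_grill_vimage[OF \<phi> G(2)]]
    by (rule monoD[OF cofr_mor_mono[OF \<phi>]])
  finally show "lim' G \<le> \<phi> (adh0 lim a)" .
qed

lemma lim_of_eq_INF: "lim_of \<nu> F = (INF a\<in>compl_elems \<inter> grill F. \<nu> a)"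
  unfolding lim_of_def Setcompr_eq_image ..

lemma pretop_lim_of: "pretop (lim_of \<nu>)"
  unfolding pretop_def conv_obj_def
proof (intro conjI allI impI)
  fix F G :: "'a set" assume "F \<subseteq> G"
  then show "lim_of \<nu> F \<le> lim_of \<nu> G"
    unfolding lim_of_eq_INF by (intro INF_superset_mono) (use grill_antimono in auto)
next
  fix \<FF> :: "'a set set" assume "\<forall>F\<in>\<FF>. lfilter F"
  show "lim_of \<nu> (\<Inter>\<FF>) = (INF F\<in>\<FF>. lim_of \<nu> F)"
    unfolding lim_of_eq_INF compl_elems_Int_grill_Inter[OF \<open>\<forall>F\<in>\<FF>. lfilter F\<close>]
    by (rule antisym) (auto intro!: INF_greatest intro: INF_lower2)
qed

lemma classical_lim_of: "classical (lim_of \<nu>)"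
  unfolding classical_def lim_of_eq_INF using compl_elems_Int_grill_cong by metis

lemma adh0_lim_of_le: "a \<in> compl_elems \<Longrightarrow> adh0 (lim_of \<nu>) a \<le> \<nu> a"
  unfolding adh0_le_iff lim_of_eq_INF by (auto intro: INF_lower)

lemma adh_structure_eq_INF:
  assumes "adh_structure \<nu>"
  shows "\<nu> l = (INF a\<in>{a \<in> compl_elems. l \<le> a}. \<nu> a)"
proof -
  have "\<nu> l = Inf {\<nu> a |a. a \<in> compl_elems \<and> l \<le> a}"
    using assms unfolding adh_structure_def by blast
  also have "{\<nu> a |a. a \<in> compl_elems \<and> l \<le> a} = \<nu> ` {a \<in> compl_elems. l \<le> a}"
    by blast
  finally show ?thesis .
qed

lemma adh_structure_mono: "adh_structure \<nu> \<Longrightarrow> mono \<nu>"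
  unfolding adh_structure_def by blast

lemma adh_mor_iff_compl_elems:
  assumes \<phi>: "cofr_mor \<phi>" and \<nu>: "adh_structure \<nu>" and \<nu>': "mono \<nu>'"
  shows "adh_mor \<nu> \<nu>' \<phi> \<longleftrightarrow> (\<forall>a\<in>compl_elems. \<nu>' (\<phi> a) \<le> \<phi> (\<nu> a))"
proof
  assume m: "adh_mor \<nu> \<nu>' \<phi>"
  show "\<forall>a\<in>compl_elems. \<nu>' (\<phi> a) \<le> \<phi> (\<nu> a)"
  proof
    fix a :: 'a
    have "\<nu>' (\<phi> a) \<le> \<phi> (\<nu> (ladj \<phi> (\<phi> a)))" using m unfolding adh_mor_def by blast
    also have "\<dots> \<le> \<phi> (\<nu> a)"
      using ladj_le_iff[OF \<phi>] adh_structure_mono[OF \<nu>] cofr_mor_mono[OF \<phi>]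
      by (meson monoD order_refl)
    finally show "\<nu>' (\<phi> a) \<le> \<phi> (\<nu> a)" .
  qed
next
  assume H: "\<forall>a\<in>compl_elems. \<nu>' (\<phi> a) \<le> \<phi> (\<nu> a)"
  show "adh_mor \<nu> \<nu>' \<phi>"
    unfolding adh_mor_def
  proof (intro conjI allI \<phi>)
    fix y
    have "\<nu>' y \<le> \<phi> (\<nu> a)" if "a \<in> compl_elems" "ladj \<phi> y \<le> a" for a
      using H that ladj_le_iff[OF \<phi>] monoD[OF \<nu>'] by (meson order_trans)
    then have "\<nu>' y \<le> (INF a\<in>{a \<in> compl_elems. ladj \<phi> y \<le> a}. \<phi> (\<nu> a))"
      by (auto intro: INF_greatest)
    also have "\<dots> = \<phi> (\<nu> (ladj \<phi> y))"
      by (simp only: adh_structure_eq_INF[OF \<nu>, of "ladj \<phi> y"] cofr_mor_Inf[OF \<phi>] image_image)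
    finally show "\<nu>' y \<le> \<phi> (\<nu> (ladj \<phi> y))" .
  qed
qed

lemma conv_mor_lim_of_iff:
  assumes \<phi>: "cofr_mor \<phi>"
  shows "conv_mor (lim_of \<nu>) lim' \<phi> \<longleftrightarrow> (\<forall>a\<in>compl_elems. adh0 lim' (\<phi> a) \<le> \<phi> (\<nu> a))"
proof -
  have "lim' G \<le> \<phi> (lim_of \<nu> (\<phi> -` G)) \<longleftrightarrow>
      (\<forall>a\<in>compl_elems. \<phi> a \<in> grill G \<longrightarrow> lim' G \<le> \<phi> (\<nu> a))" if "lfilter G" for G
    unfolding lim_of_eq_INF cofr_mor_Inf[OF \<phi>] image_image le_INF_iff
    using in_grill_vimage_iff[OF \<phi> that] by blast
  then show ?thesis unfolding conv_mor_def adh0_le_iff using \<phi> by blast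
qed

theorem conv_mor_lim_of_iff_adh_mor:
  assumes \<nu>: "adh_structure \<nu>" and \<phi>: "cofr_mor \<phi>"
  shows "conv_mor (lim_of \<nu>) lim' \<phi> \<longleftrightarrow> adh_mor \<nu> (adh lim') \<phi>"
proof -
  have "conv_mor (lim_of \<nu>) lim' \<phi> \<longleftrightarrow> (\<forall>a\<in>compl_elems. adh0 lim' (\<phi> a) \<le> \<phi> (\<nu> a))"
    by (rule conv_mor_lim_of_iff[OF \<phi>])
  also have "\<dots> \<longleftrightarrow> (\<forall>a\<in>compl_elems. adh lim' (\<phi> a) \<le> \<phi> (\<nu> a))"
    by (auto simp: adh_eq_adh0 cofr_mor_compl_elems[OF \<phi>])
  also have "\<dots> \<longleftrightarrow> adh_mor \<nu> (adh lim') \<phi>"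
    by (rule adh_mor_iff_compl_elems[OF \<phi> \<nu> adh_structure_mono[OF adh_structure_adh], symmetric])
  finally show ?thesis .
qed

lemma adh_mor_adh:
  assumes "conv_mor lim lim' \<phi>"
  shows "adh_mor (adh lim) (adh lim') \<phi>"
proof -
  have \<phi>: "cofr_mor \<phi>" using assms unfolding conv_mor_def by blast
  have "adh lim' (\<phi> a) \<le> \<phi> (adh lim a)" if "a \<in> compl_elems" for a
    using adh0_conv_mor[OF assms] that by (simp add: adh_eq_adh0 cofr_mor_compl_elems[OF \<phi>])
  then show ?thesis
    by (simp add: adh_mor_iff_compl_elems[OF \<phi> adh_structure_adh adh_structure_mono[OF adh_structure_adh]])
qed

lemma conv_mor_lim_of:
  assumes \<nu>: "adh_structure \<nu>" and \<nu>': "adh_structure \<nu>'" and m: "adh_mor \<nu> \<nu>' \<phi>"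
  shows "conv_mor (lim_of \<nu>) (lim_of \<nu>') \<phi>"
proof -
  have \<phi>: "cofr_mor \<phi>" using m unfolding adh_mor_def by blast
  have "adh0 (lim_of \<nu>') (\<phi> a) \<le> \<phi> (\<nu> a)" if "a \<in> compl_elems" for a
  proof -
    have "adh0 (lim_of \<nu>') (\<phi> a) \<le> \<nu>' (\<phi> a)"
      using that by (intro adh0_lim_of_le cofr_mor_compl_elems[OF \<phi>])
    also have "\<dots> \<le> \<phi> (\<nu> a)"
      using m that adh_mor_iff_compl_elems[OF \<phi> \<nu> adh_structure_mono[OF \<nu>']] by blast
    finally show ?thesis .
  qed
  then show ?thesis by (simp add: conv_mor_lim_of_iff[OF \<phi>])
qed

theorem mainTheorem9:
  shows
    \<comment> \<open>object part of G: pretopological (possibly classical) objects go to adherence objects\<close>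
    "(\<forall>lim :: 'a::coframe set \<Rightarrow> 'a. pretop lim \<longrightarrow> adh_structure (adh lim))
   \<comment> \<open>object part of F: adherence objects go to classical pretopological objects\<close>
   \<and> (\<forall>\<nu> :: 'a \<Rightarrow> 'a. adh_structure \<nu> \<longrightarrow> pretop (lim_of \<nu>) \<and> classical (lim_of \<nu>))
   \<comment> \<open>G is identity on morphisms\<close>
   \<and> (\<forall>(lim :: 'a set \<Rightarrow> 'a) (lim' :: 'b::coframe set \<Rightarrow> 'b) \<phi>.
        pretop lim \<longrightarrow> pretop lim' \<longrightarrow> conv_mor lim lim' \<phi> \<longrightarrow> adh_mor (adh lim) (adh lim') \<phi>)
   \<comment> \<open>F is identity on morphisms\<close>
   \<and> (\<forall>(\<nu> :: 'a \<Rightarrow> 'a) (\<nu>' :: 'b \<Rightarrow> 'b) \<phi>.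
        adh_structure \<nu> \<longrightarrow> adh_structure \<nu>' \<longrightarrow> adh_mor \<nu> \<nu>' \<phi> \<longrightarrow> conv_mor (lim_of \<nu>) (lim_of \<nu>') \<phi>)
   \<comment> \<open>adjunction F -| G (identity hom-set bijection)\<close>
   \<and> (\<forall>(\<nu> :: 'a \<Rightarrow> 'a) (lim' :: 'b set \<Rightarrow> 'b) \<phi>.
        adh_structure \<nu> \<longrightarrow> pretop lim' \<longrightarrow> cofr_mor \<phi> \<longrightarrow>
        (conv_mor (lim_of \<nu>) lim' \<phi> \<longleftrightarrow> adh_mor \<nu> (adh lim') \<phi>))"
  by (simp add: adh_structure_adh pretop_lim_of classical_lim_of adh_mor_adh conv_mor_lim_of
                conv_mor_lim_of_iff_adh_mor)

end
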